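(* Let $\theta_0\in\,]0,\pi/2[$ and $\kappa>0$, and define $F(\theta)=G'(\theta)\tan\theta-G(\theta)$ for $\theta\in[\theta_0,\pi/2[$. Then for every $z\in\,]-\infty,\,e^{-\kappa}-1]$ the equation $F(\theta)=z$ has a unique solution $\theta=\varphi(z)\in[\theta_0,\pi/2[$.
   Context: For $\theta\in[\theta_0,\pi/2]$, $G(\theta)=\Big(1-\exp\Big\{\frac{-\kappa}{\cos(\theta-\theta_0)}\Big\}\Big)\cos(\theta-\theta_0)$. *)

theory Defs
  imports "HOL-Analysis.Analysis"
begin

definition G :: "real \<Rightarrow> real \<Rightarrow> real \<Rightarrow> real" where
  "G \<kappa> \<theta>\<^sub>0 \<theta> = (1 - exp (- \<kappa> / cos (\<theta> - \<theta>\<^sub>0))) * cos (\<theta> - \<theta>\<^sub>0)"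

definition F :: "real \<Rightarrow> real \<Rightarrow> real \<Rightarrow> real" where
  "F \<kappa> \<theta>\<^sub>0 \<theta> = deriv (G \<kappa> \<theta>\<^sub>0) \<theta> * tan \<theta> - G \<kappa> \<theta>\<^sub>0 \<theta>"

end

theory Submission
  imports Defs
begin

text \<open>Write \<open>u = \<theta> - \<theta>\<^sub>0\<close> and \<open>a = \<kappa> / cos u\<close>. Then \<open>G' = -(1 - e\<^sup>-\<^sup>a (1 + a)) sin u \<le> 0\<close>,
  \<open>G'' < 0\<close>, and \<open>F' = G'' tan \<theta> + G' tan\<^sup>2 \<theta> < 0\<close>, so \<open>F\<close> is strictly decreasing on
  \<open>[\<theta>\<^sub>0, \<pi>/2[\<close>. It starts at \<open>F(\<theta>\<^sub>0) = -G(\<theta>\<^sub>0) = e\<^sup>-\<^sup>\<kappa> - 1\<close>, and it is unbounded below,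
  because \<open>G \<ge> 0\<close> and \<open>G'\<close> stays below a negative constant while \<open>tan \<theta> \<rightarrow> \<infinity>\<close>.
  The intermediate value theorem gives existence, strict monotonicity uniqueness.\<close>

lemma unique_root_if_deriv_neg_unbounded_below:
  fixes f :: "real \<Rightarrow> real"
  assumes deriv_neg: "\<And>x. a \<le> x \<Longrightarrow> x < b \<Longrightarrow> \<exists>d. (f has_real_derivative d) (at x) \<and> d < 0"
    and unbounded: "\<And>y. \<exists>x\<in>{a..<b}. f x \<le> y"
    and "z \<le> f a"
  shows "\<exists>!x. x \<in> {a..<b} \<and> f x = z"
proof -
  obtain c where c: "c \<in> {a..<b}" "f c \<le> z"
    using unbounded by blast
  have "\<forall>x. a \<le> x \<and> x \<le> c \<longrightarrow> isCont f x"
    using c deriv_neg by (metis DERIV_isCont atLeastLessThan_iff le_less_trans)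
  then obtain x where x: "a \<le> x" "x \<le> c" "f x = z"
    using IVT2[of f c z a] c \<open>z \<le> f a\<close> by auto
  have decreasing: "f v < f u" if "a \<le> u" "u < v" "v < b" for u v
  proof (rule DERIV_neg_imp_decreasing[of u v f])
    show "\<exists>d. (f has_real_derivative d) (at t) \<and> d < 0" if "u \<le> t" "t \<le> v" for t
      using that \<open>a \<le> u\<close> \<open>v < b\<close> by (intro deriv_neg) auto
  qed fact
  have "y = x" if "y \<in> {a..<b}" "f y = z" for y
    using decreasing[of x y] decreasing[of y x] that x c
    by (cases x y rule: linorder_cases) auto
  with x c show ?thesis
    by auto
qed

lemma one_minus_exp_minus_mult_one_plus_pos:
  fixes x :: real
  assumes "0 < x"
  shows "0 < 1 - exp (- x) * (1 + x)"
proof -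
  have "exp (- x) * (1 + x) < exp (- x) * exp x"
    using exp_minus_greater[of "- x"] assms by simp
  then show ?thesis
    by (simp flip: exp_add)
qed

definition dG :: "real \<Rightarrow> real \<Rightarrow> real \<Rightarrow> real" where
  "dG \<kappa> \<theta>\<^sub>0 \<theta> =
    - (1 - exp (- \<kappa> / cos (\<theta> - \<theta>\<^sub>0)) * (1 + \<kappa> / cos (\<theta> - \<theta>\<^sub>0))) * sin (\<theta> - \<theta>\<^sub>0)"

definition ddG :: "real \<Rightarrow> real \<Rightarrow> real \<Rightarrow> real" where
  "ddG \<kappa> \<theta>\<^sub>0 \<theta> =
    - exp (- \<kappa> / cos (\<theta> - \<theta>\<^sub>0)) * \<kappa>\<^sup>2 * (sin (\<theta> - \<theta>\<^sub>0))\<^sup>2 / (cos (\<theta> - \<theta>\<^sub>0)) ^ 3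
    - (1 - exp (- \<kappa> / cos (\<theta> - \<theta>\<^sub>0)) * (1 + \<kappa> / cos (\<theta> - \<theta>\<^sub>0))) * cos (\<theta> - \<theta>\<^sub>0)"

lemma G_has_real_derivative:
  assumes "cos (\<theta> - \<theta>\<^sub>0) \<noteq> 0"
  shows "(G \<kappa> \<theta>\<^sub>0 has_real_derivative dG \<kappa> \<theta>\<^sub>0 \<theta>) (at \<theta>)"
  unfolding G_def[abs_def] using assms
  by (auto intro!: derivative_eq_intros simp: dG_def field_simps power2_eq_square)

lemma dG_has_real_derivative:
  assumes "cos (\<theta> - \<theta>\<^sub>0) \<noteq> 0"
  shows "(dG \<kappa> \<theta>\<^sub>0 has_real_derivative ddG \<kappa> \<theta>\<^sub>0 \<theta>) (at \<theta>)"
  unfolding dG_def[abs_def] using assms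
  by (auto intro!: derivative_eq_intros simp: ddG_def field_simps power2_eq_square power3_eq_cube)

lemma G_nonneg:
  assumes "0 \<le> \<kappa>" "0 < cos (\<theta> - \<theta>\<^sub>0)"
  shows "0 \<le> G \<kappa> \<theta>\<^sub>0 \<theta>"
  using assms by (simp add: G_def)

lemma dG_nonpos:
  assumes "0 < \<kappa>" "0 < cos (\<theta> - \<theta>\<^sub>0)" "0 \<le> sin (\<theta> - \<theta>\<^sub>0)"
  shows "dG \<kappa> \<theta>\<^sub>0 \<theta> \<le> 0"
  unfolding dG_def using assms one_minus_exp_minus_mult_one_plus_pos[of "\<kappa> / cos (\<theta> - \<theta>\<^sub>0)"]
  by (intro mult_nonpos_nonneg) auto

lemma dG_neg:
  assumes "0 < \<kappa>" "0 < cos (\<theta> - \<theta>\<^sub>0)" "0 < sin (\<theta> - \<theta>\<^sub>0)"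
  shows "dG \<kappa> \<theta>\<^sub>0 \<theta> < 0"
  unfolding dG_def using assms one_minus_exp_minus_mult_one_plus_pos[of "\<kappa> / cos (\<theta> - \<theta>\<^sub>0)"]
  by (intro mult_neg_pos) auto

lemma ddG_neg:
  assumes "0 < \<kappa>" "0 < cos (\<theta> - \<theta>\<^sub>0)"
  shows "ddG \<kappa> \<theta>\<^sub>0 \<theta> < 0"
proof -
  have "0 \<le> exp (- \<kappa> / cos (\<theta> - \<theta>\<^sub>0)) * \<kappa>\<^sup>2 * (sin (\<theta> - \<theta>\<^sub>0))\<^sup>2 / (cos (\<theta> - \<theta>\<^sub>0)) ^ 3"
    using assms by simp
  moreover have "0 < (1 - exp (- \<kappa> / cos (\<theta> - \<theta>\<^sub>0)) * (1 + \<kappa> / cos (\<theta> - \<theta>\<^sub>0))) * cos (\<theta> - \<theta>\<^sub>0)"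
    using assms one_minus_exp_minus_mult_one_plus_pos[of "\<kappa> / cos (\<theta> - \<theta>\<^sub>0)"] by simp
  ultimately show ?thesis
    unfolding ddG_def by linarith
qed

lemma dG_antimono:
  assumes "0 < \<kappa>" "\<theta>\<^sub>0 - pi / 2 < x" "x \<le> y" "y < \<theta>\<^sub>0 + pi / 2"
  shows "dG \<kappa> \<theta>\<^sub>0 y \<le> dG \<kappa> \<theta>\<^sub>0 x"
proof (rule deriv_nonpos_imp_antimono[OF dG_has_real_derivative])
  fix t assume "t \<in> {x..y}"
  then have "0 < cos (t - \<theta>\<^sub>0)"
    using assms by (intro cos_gt_zero_pi) auto
  then show "cos (t - \<theta>\<^sub>0) \<noteq> 0" "ddG \<kappa> \<theta>\<^sub>0 t \<le> 0"
    using ddG_neg[OF \<open>0 < \<kappa>\<close>] by (auto intro: less_imp_le)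
qed fact

lemma F_eq:
  assumes "cos (\<theta> - \<theta>\<^sub>0) \<noteq> 0"
  shows "F \<kappa> \<theta>\<^sub>0 \<theta> = dG \<kappa> \<theta>\<^sub>0 \<theta> * tan \<theta> - G \<kappa> \<theta>\<^sub>0 \<theta>"
  using DERIV_imp_deriv[OF G_has_real_derivative[OF assms]] by (simp add: F_def)

lemma F_at_start: "F \<kappa> \<theta>\<^sub>0 \<theta>\<^sub>0 = exp (- \<kappa>) - 1"
  by (simp add: F_eq dG_def G_def)

lemma F_has_real_derivative:
  assumes "cos \<theta> \<noteq> 0" "cos (\<theta> - \<theta>\<^sub>0) \<noteq> 0"
  shows "(F \<kappa> \<theta>\<^sub>0 has_real_derivative ddG \<kappa> \<theta>\<^sub>0 \<theta> * tan \<theta> + dG \<kappa> \<theta>\<^sub>0 \<theta> * (tan \<theta>)\<^sup>2) (at \<theta>)"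
proof (rule has_field_derivative_transform_within_open)
  show "((\<lambda>t. dG \<kappa> \<theta>\<^sub>0 t * tan t - G \<kappa> \<theta>\<^sub>0 t) has_real_derivative
      ddG \<kappa> \<theta>\<^sub>0 \<theta> * tan \<theta> + dG \<kappa> \<theta>\<^sub>0 \<theta> * (tan \<theta>)\<^sup>2) (at \<theta>)"
    using assms G_has_real_derivative dG_has_real_derivative
    by (auto intro!: derivative_eq_intros simp: tan_def field_simps power2_eq_square sin_squared_eq)
  show "open {t. cos (t - \<theta>\<^sub>0) \<noteq> 0}"
    by (intro open_Collect_neq continuous_intros)
qed (use assms F_eq in auto)

lemma F_deriv_neg:
  assumes "0 < \<kappa>" "0 < \<theta>\<^sub>0" "\<theta>\<^sub>0 \<le> \<theta>" "\<theta> < pi / 2"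
  shows "\<exists>d. (F \<kappa> \<theta>\<^sub>0 has_real_derivative d) (at \<theta>) \<and> d < 0"
proof -
  have "0 < cos (\<theta> - \<theta>\<^sub>0)" "0 \<le> sin (\<theta> - \<theta>\<^sub>0)" "0 < cos \<theta>" "0 < tan \<theta>"
    using assms by (auto intro!: cos_gt_zero_pi sin_ge_zero tan_gt_zero)
  then have "ddG \<kappa> \<theta>\<^sub>0 \<theta> * tan \<theta> + dG \<kappa> \<theta>\<^sub>0 \<theta> * (tan \<theta>)\<^sup>2 < 0"
    using ddG_neg[OF \<open>0 < \<kappa>\<close>] dG_nonpos[OF \<open>0 < \<kappa>\<close>]
    by (simp add: add_neg_nonpos mult_neg_pos mult_nonpos_nonneg)
  moreover have "(F \<kappa> \<theta>\<^sub>0 has_real_derivative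
      ddG \<kappa> \<theta>\<^sub>0 \<theta> * tan \<theta> + dG \<kappa> \<theta>\<^sub>0 \<theta> * (tan \<theta>)\<^sup>2) (at \<theta>)"
    using \<open>0 < cos \<theta>\<close> \<open>0 < cos (\<theta> - \<theta>\<^sub>0)\<close> by (intro F_has_real_derivative) auto
  ultimately show ?thesis
    by blast
qed

lemma F_unbounded_below:
  assumes "0 < \<kappa>" "0 < \<theta>\<^sub>0" "\<theta>\<^sub>0 < pi / 2"
  shows "\<exists>\<theta>\<in>{\<theta>\<^sub>0..<pi / 2}. F \<kappa> \<theta>\<^sub>0 \<theta> \<le> y"
proof -
  define \<theta>\<^sub>1 where "\<theta>\<^sub>1 = (\<theta>\<^sub>0 + pi / 2) / 2"
  have "\<theta>\<^sub>0 < \<theta>\<^sub>1" "\<theta>\<^sub>1 < pi / 2"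
    using assms by (auto simp: \<theta>\<^sub>1_def)
  have dG\<^sub>1: "dG \<kappa> \<theta>\<^sub>0 \<theta>\<^sub>1 < 0"
    using assms \<open>\<theta>\<^sub>0 < \<theta>\<^sub>1\<close> \<open>\<theta>\<^sub>1 < pi / 2\<close> by (intro dG_neg cos_gt_zero_pi sin_gt_zero) auto
  define \<theta> where "\<theta> = arctan (max (tan \<theta>\<^sub>1) (y / dG \<kappa> \<theta>\<^sub>0 \<theta>\<^sub>1))"
  have "arctan (tan \<theta>\<^sub>1) \<le> \<theta>"
    by (simp add: \<theta>_def arctan_le_iff)
  then have "\<theta>\<^sub>1 \<le> \<theta>"
    using arctan_tan[of \<theta>\<^sub>1] assms \<open>\<theta>\<^sub>0 < \<theta>\<^sub>1\<close> \<open>\<theta>\<^sub>1 < pi / 2\<close> by simp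
  have "\<theta> < pi / 2"
    unfolding \<theta>_def by (rule arctan_ubound)
  have tan_\<theta>: "tan \<theta> = max (tan \<theta>\<^sub>1) (y / dG \<kappa> \<theta>\<^sub>0 \<theta>\<^sub>1)"
    by (simp add: \<theta>_def tan_arctan)
  have "0 < tan \<theta>\<^sub>1"
    using assms \<open>\<theta>\<^sub>0 < \<theta>\<^sub>1\<close> \<open>\<theta>\<^sub>1 < pi / 2\<close> by (intro tan_gt_zero) auto
  have cos_pos: "0 < cos (\<theta> - \<theta>\<^sub>0)"
    using assms \<open>\<theta>\<^sub>0 < \<theta>\<^sub>1\<close> \<open>\<theta>\<^sub>1 \<le> \<theta>\<close> \<open>\<theta> < pi / 2\<close> by (intro cos_gt_zero_pi) auto
  have "F \<kappa> \<theta>\<^sub>0 \<theta> \<le> dG \<kappa> \<theta>\<^sub>0 \<theta> * tan \<theta>"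
    using F_eq[of \<theta> \<theta>\<^sub>0 \<kappa>] G_nonneg[of \<kappa> \<theta> \<theta>\<^sub>0] cos_pos assms by simp
  also have "\<dots> \<le> dG \<kappa> \<theta>\<^sub>0 \<theta>\<^sub>1 * tan \<theta>"
    using dG_antimono[of \<kappa> \<theta>\<^sub>0 \<theta>\<^sub>1 \<theta>] assms \<open>\<theta>\<^sub>0 < \<theta>\<^sub>1\<close> \<open>\<theta>\<^sub>1 \<le> \<theta>\<close> \<open>\<theta> < pi / 2\<close> \<open>0 < tan \<theta>\<^sub>1\<close>
    by (intro mult_right_mono) (auto simp: tan_\<theta>)
  also have "\<dots> \<le> dG \<kappa> \<theta>\<^sub>0 \<theta>\<^sub>1 * (y / dG \<kappa> \<theta>\<^sub>0 \<theta>\<^sub>1)"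
    using dG\<^sub>1 by (intro mult_left_mono_neg) (auto simp: tan_\<theta>)
  also have "\<dots> = y"
    using dG\<^sub>1 by simp
  finally show ?thesis
    using \<open>\<theta>\<^sub>0 < \<theta>\<^sub>1\<close> \<open>\<theta>\<^sub>1 \<le> \<theta>\<close> \<open>\<theta> < pi / 2\<close> by auto
qed

theorem lemma3p2:
  fixes \<kappa> \<theta>\<^sub>0 z :: real
  assumes "0 < \<theta>\<^sub>0" "\<theta>\<^sub>0 < pi / 2" "0 < \<kappa>"
    and "z \<le> exp (- \<kappa>) - 1"
  shows "\<exists>!\<theta>. \<theta> \<in> {\<theta>\<^sub>0..<pi / 2} \<and> F \<kappa> \<theta>\<^sub>0 \<theta> = z"
  using assms
  by (intro unique_root_if_deriv_neg_unbounded_below F_deriv_neg F_unbounded_below)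
    (simp_all add: F_at_start)

end
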